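(* Let $\alpha>0$ be non-integer, $n=\lfloor\alpha\rfloor+1$, $a\in\mathbb{R}$, $a(\alpha)=a+n-1$, $c\in\mathbb{R}$, and $f:\mathbb{N}_{a(\alpha)}\times\mathbb{R}\to\mathbb{R}$. Suppose $y:\mathbb{N}_{a(\alpha)}\to\mathbb{R}$ satisfies the initial value problem $$\nabla^{\alpha}_{a(\alpha)-1}y(t)=f(t,y(t)),\quad t=a(\alpha)+1,a(\alpha)+2,\dots,\qquad \nabla^{-(n-\alpha)}_{a(\alpha)-1}y(t)\big|_{t=a(\alpha)}=y(a(\alpha))=c.$$ Then for all $t\in\mathbb{N}_{a(\alpha)}$, $$y(t)=\frac{(t-a(\alpha)+1)^{\overline{\alpha-1}}}{\Gamma(\alpha)}\,c+\nabla^{-\alpha}_{a(\alpha)}f(t,y(t)),$$ where $\nabla^{-\alpha}_{a(\alpha)}f(t,y(t))=\frac{1}{\Gamma(\alpha)}\sum_{s=a(\alpha)+1}^{t}(t-\rho(s))^{\overline{\alpha-1}}f(s,y(s))$.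
   Context: Notation: $\mathbb{N}_c=\{c,c+1,\dots\}$, $\rho(t)=t-1$, $\nabla h(t)=h(t)-h(t-1)$, $\nabla^m=\nabla(\nabla^{m-1})$. Rising factorial $t^{\overline{\gamma}}=\Gamma(t+\gamma)/\Gamma(t)$ with $0^{\overline{\gamma}}=0$. Nabla left fractional sum of order $\gamma>0$ starting at $d$: $\nabla_d^{-\gamma}h(t)=\frac{1}{\Gamma(\gamma)}\sum_{s=d+1}^{t}(t-\rho(s))^{\overline{\gamma-1}}h(s)$, with sums whose upper limit is below the lower limit equal to $0$. Nabla left fractional difference of order $\alpha$: $\nabla_d^{\alpha}h(t)=\nabla^n\nabla_d^{-(n-\alpha)}h(t)$. *)

theory Defs
  imports "HOL-Analysis.Analysis"
begin

definition rising_pow :: "real \<Rightarrow> real \<Rightarrow> real" where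
  "rising_pow t \<gamma> = (if t = 0 then 0 else Gamma (t + \<gamma>) / Gamma t)"

text \<open>Nabla left fractional sum of order gamma starting at d, evaluated at a point t of
  d + N: the sum over s = d+1, ..., t (s = d + j, j = 1 .. t - d); empty if t - d < 1.\<close>
definition nabla_frac_sum :: "real \<Rightarrow> real \<Rightarrow> (real \<Rightarrow> real) \<Rightarrow> real \<Rightarrow> real" where
  "nabla_frac_sum d \<gamma> h t =
     (1 / Gamma \<gamma>) * (\<Sum>j\<in>{1..nat \<lfloor>t - d\<rfloor>}.
         rising_pow (t - (d + real j - 1)) (\<gamma> - 1) * h (d + real j))"

definition nabla :: "(real \<Rightarrow> real) \<Rightarrow> real \<Rightarrow> real" where
  "nabla h t = h t - h (t - 1)"

definition nabla_pow :: "nat \<Rightarrow> (real \<Rightarrow> real) \<Rightarrow> real \<Rightarrow> real" where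
  "nabla_pow m h = (nabla ^^ m) h"

definition nabla_frac_diff :: "real \<Rightarrow> real \<Rightarrow> (real \<Rightarrow> real) \<Rightarrow> real \<Rightarrow> real" where
  "nabla_frac_diff d \<alpha> h t =
     (let n = nat \<lfloor>\<alpha>\<rfloor> + 1 in nabla_pow n (nabla_frac_sum d (real n - \<alpha>) h) t)"

end

theory Submission imports Defs "HOL-Computational_Algebra.Formal_Power_Series" begin

(* Proof by generating functions.  Sample a function h on the grid d + 1, d + 2, ... and
   encode it as the power series H = sum_{j >= 1} h(d + j) X^j.  Then
   (1) the fractional sum of order g > 0 is multiplication by the binomial series
       (1 - X)^(-g) = sum_i g^(rising i) / i! X^i, whose coefficients are exactly the
       rising-factorial kernel of the sum;
   (2) the backward difference is multiplication by 1 - X = (1 - X)^1;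
   (3) the exponents add by the Chu-Vandermonde identity.
   Hence the fractional difference of order alpha is multiplication by (1 - X)^alpha, which is
   inverted by multiplying with (1 - X)^(-alpha).  Reading off the coefficient of X^(k+1)
   splits the result into the initial-value term (coefficient of X^1, equal to y(a(alpha)) = c)
   and the fractional sum of the right-hand side f. *)

text \<open>The coefficients of \<open>(1 - X)^(-g)\<close>: \<open>g^(rising i) / i!\<close>.\<close>
definition binom_kernel :: "real \<Rightarrow> nat \<Rightarrow> real" where
  "binom_kernel g i = pochhammer g i / fact i"

definition binom_fps :: "real \<Rightarrow> real fps" where
  "binom_fps g = Abs_fps (binom_kernel g)"

lemma binom_kernel_rising_pow:
  assumes "g > 0"
  shows "rising_pow (real i + 1) (g - 1) / Gamma g = binom_kernel g i"
proof -
  have "g \<notin> \<int>\<^sub>\<le>\<^sub>0" using assms nonpos_Ints_cases by force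
  then have poch: "pochhammer g i = Gamma (g + real i) / Gamma g"
    using pochhammer_Gamma[of g i] by simp
  have fact: "Gamma (real i + 1) = fact i"
    using Gamma_of_int[of "int (Suc i)"] by (simp add: add.commute)
  have "Gamma g > 0" using assms by simp
  then show ?thesis
    unfolding rising_pow_def binom_kernel_def using fact poch
    by (simp add: field_simps add.commute add.left_commute)
qed

text \<open>Exponent law \<open>(1 - X)^(-a-b) = (1 - X)^(-a) (1 - X)^(-b)\<close>, i.e. Chu-Vandermonde.\<close>
lemma binom_fps_add: "binom_fps (a + b) = binom_fps a * binom_fps b"
proof (rule fps_ext)
  fix m
  have "binom_kernel (a + b) m
      = (\<Sum>k\<le>m. of_nat (m choose k) * pochhammer a k * pochhammer b (m - k)) / fact m"
    unfolding binom_kernel_def pochhammer_binomial_sum ..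
  also have "\<dots> = (\<Sum>k\<le>m. binom_kernel a k * binom_kernel b (m - k))"
    unfolding sum_divide_distrib binom_kernel_def
    by (intro sum.cong refl) (simp add: binomial_fact field_simps)
  finally show "fps_nth (binom_fps (a + b)) m = fps_nth (binom_fps a * binom_fps b) m"
    unfolding binom_fps_def fps_mult_nth by (simp add: atLeast0AtMost)
qed

lemma binom_fps_0: "binom_fps 0 = 1"
  by (rule fps_ext) (simp add: binom_fps_def binom_kernel_def pochhammer_0_left)

lemma binom_fps_inverse: "binom_fps g * binom_fps (- g) = 1"
  using binom_fps_add[of g "- g"] by (simp add: binom_fps_0)

lemma binom_fps_minus_one: "binom_fps (-1) = 1 - fps_X"
proof (rule fps_ext)
  fix m
  have vanish: "pochhammer (-1::real) (Suc (Suc i)) = 0" for i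
    by (simp add: pochhammer_rec pochhammer_rec')
  consider "m = 0" | "m = 1" | i where "m = Suc (Suc i)"
    by (metis One_nat_def not0_implies_Suc)
  then show "fps_nth (binom_fps (-1)) m = fps_nth (1 - fps_X) m"
    by cases (simp_all add: binom_fps_def binom_kernel_def fps_X_def vanish)
qed

lemma binom_fps_minus_nat: "binom_fps (- real p) = (1 - fps_X) ^ p"
proof (induction p)
  case 0
  then show ?case by (simp add: binom_fps_0)
next
  case (Suc p)
  have "binom_fps (- real (Suc p)) = binom_fps (-1) * binom_fps (- real p)"
    by (simp flip: binom_fps_add add: algebra_simps)
  then show ?case using Suc binom_fps_minus_one by simp
qed

lemma coeff_Suc_mult_binom_fps:
  assumes "fps_nth F 0 = 0"
  shows "fps_nth (F * binom_fps g) (Suc k)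
       = fps_nth F 1 * binom_kernel g k + (\<Sum>i=1..k. fps_nth F (Suc i) * binom_kernel g (k - i))"
proof -
  have "fps_nth (F * binom_fps g) (Suc k) = (\<Sum>j=0..Suc k. fps_nth F j * binom_kernel g (Suc k - j))"
    unfolding fps_mult_nth binom_fps_def by simp
  also have "\<dots> = fps_nth F 1 * binom_kernel g k + (\<Sum>j=Suc 1..Suc k. fps_nth F j * binom_kernel g (Suc k - j))"
    by (simp add: sum.atLeast_Suc_atMost assms)
  also have "(\<Sum>j=Suc 1..Suc k. fps_nth F j * binom_kernel g (Suc k - j))
           = (\<Sum>i=1..k. fps_nth F (Suc i) * binom_kernel g (k - i))"
    by (simp only: sum.shift_bounds_cl_Suc_ivl) simp
  finally show ?thesis .
qed

definition grid_fps :: "real \<Rightarrow> (real \<Rightarrow> real) \<Rightarrow> real fps" where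
  "grid_fps d h = Abs_fps (\<lambda>j. if j = 0 then 0 else h (d + real j))"

lemma nabla_frac_sum_kernel:
  assumes "g > 0"
  shows "nabla_frac_sum d g h (d + real m) = (\<Sum>j=1..m. h (d + real j) * binom_kernel g (m - j))"
proof -
  have "binom_kernel g (m - j) = rising_pow (d + real m - (d + real j - 1)) (g - 1) / Gamma g"
    if "j \<in> {1..m}" for j
  proof -
    have "d + real m - (d + real j - 1) = real (m - j) + 1"
      using that by (simp add: of_nat_diff)
    then show ?thesis by (simp only: binom_kernel_rising_pow[OF assms])
  qed
  then show ?thesis
    unfolding nabla_frac_sum_def sum_distrib_left by (intro sum.cong) auto
qed

lemma nabla_frac_sum_fps:
  assumes "g > 0"
  shows "nabla_frac_sum d g h (d + real m) = fps_nth (binom_fps g * grid_fps d h) m"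
proof -
  have "fps_nth (binom_fps g * grid_fps d h) m
      = (\<Sum>j=0..m. (if j = 0 then 0 else h (d + real j)) * binom_kernel g (m - j))"
    unfolding mult.commute[of "binom_fps g"] by (simp add: fps_mult_nth binom_fps_def grid_fps_def)
  also have "\<dots> = (\<Sum>j=1..m. h (d + real j) * binom_kernel g (m - j))"
    by (simp add: sum.atLeast_Suc_atMost)
  finally show ?thesis using nabla_frac_sum_kernel[OF assms] by simp
qed

lemma nabla_pow_Suc: "nabla_pow (Suc p) H t = nabla_pow p H t - nabla_pow p H (t - 1)"
  by (simp add: nabla_pow_def nabla_def)

lemma nabla_pow_vanishing:
  assumes "\<And>t. t \<le> d \<Longrightarrow> H t = 0" and "t \<le> d"
  shows "nabla_pow p H t = 0"
  using assms(2)
proof (induction p arbitrary: t)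
  case 0
  then show ?case using assms(1) by (simp add: nabla_pow_def)
next
  case (Suc p)
  then show ?case by (simp add: nabla_pow_Suc)
qed

lemma nabla_pow_fps:
  assumes vanish: "\<And>t. t \<le> d \<Longrightarrow> H t = 0"
  shows "nabla_pow p H (d + real m) = fps_nth ((1 - fps_X) ^ p * Abs_fps (\<lambda>m. H (d + real m))) m"
proof (induction p arbitrary: m)
  case 0
  then show ?case by (simp add: nabla_pow_def)
next
  case (Suc p m)
  let ?A = "(1 - fps_X) ^ p * Abs_fps (\<lambda>m. H (d + real m))"
  have step: "(1 - fps_X) ^ Suc p * Abs_fps (\<lambda>m. H (d + real m)) = ?A - fps_X * ?A"
    by (simp add: algebra_simps)
  show ?case
  proof (cases m)
    case 0
    then have "nabla_pow p H (d + real m - 1) = 0" by (intro nabla_pow_vanishing[OF vanish]) auto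
    then show ?thesis unfolding nabla_pow_Suc step using Suc.IH[of 0] 0 by simp
  next
    case (Suc m')
    then have "d + real m - 1 = d + real m'" by simp
    then show ?thesis
      unfolding nabla_pow_Suc step fps_sub_nth Suc.IH[of m] using Suc.IH[of m'] Suc by simp
  qed
qed

text \<open>Key identity: the fractional difference of order \<open>\<alpha>\<close> is multiplication by \<open>(1 - X)^\<alpha>\<close>,
  since \<open>(1 - X)^n (1 - X)^(\<alpha> - n) = (1 - X)^\<alpha>\<close>.\<close>
lemma nabla_frac_diff_fps:
  assumes "\<alpha> > 0"
  shows "nabla_frac_diff d \<alpha> y (d + real m) = fps_nth (binom_fps (- \<alpha>) * grid_fps d y) m"
proof -
  define n where "n = nat \<lfloor>\<alpha>\<rfloor> + 1"
  have pos: "real n - \<alpha> > 0" unfolding n_def using assms by linarith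
  have "nabla_frac_diff d \<alpha> y (d + real m) = nabla_pow n (nabla_frac_sum d (real n - \<alpha>) y) (d + real m)"
    unfolding nabla_frac_diff_def n_def by (simp add: Let_def)
  also have "\<dots> = fps_nth ((1 - fps_X) ^ n
                  * Abs_fps (\<lambda>m. nabla_frac_sum d (real n - \<alpha>) y (d + real m))) m"
    by (rule nabla_pow_fps) (simp add: nabla_frac_sum_def)
  also have "Abs_fps (\<lambda>m. nabla_frac_sum d (real n - \<alpha>) y (d + real m))
           = binom_fps (real n - \<alpha>) * grid_fps d y"
    by (rule fps_ext) (simp add: nabla_frac_sum_fps[OF pos])
  also have "(1 - fps_X) ^ n * (binom_fps (real n - \<alpha>) * grid_fps d y) = binom_fps (- \<alpha>) * grid_fps d y"
    unfolding binom_fps_minus_nat[symmetric] mult.assoc[symmetric] binom_fps_add[symmetric] by simp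
  finally show ?thesis .
qed

text \<open>With \<open>b = a(\<alpha>)\<close> and \<open>Y\<close> the series of \<open>y(b), y(b + 1), \<dots>\<close>, the series
  \<open>G = (1 - X)^\<alpha> Y\<close> has coefficients \<open>0, c, f(b + 1, y(b + 1)), \<dots>\<close>, and \<open>Y = G (1 - X)^(-\<alpha>)\<close>.\<close>

theorem theorem5p1:
  fixes \<alpha> a c :: real and n :: nat and f :: "real \<Rightarrow> real \<Rightarrow> real" and y :: "real \<Rightarrow> real"
  assumes "\<alpha> > 0" and "\<alpha> \<notin> \<int>"
    and "n = nat \<lfloor>\<alpha>\<rfloor> + 1"
    and eq: "\<And>k::nat. k \<ge> 1 \<Longrightarrow>
           nabla_frac_diff (a + real n - 1 - 1) \<alpha> y (a + real n - 1 + real k)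
             = f (a + real n - 1 + real k) (y (a + real n - 1 + real k))"
    and init1: "nabla_frac_sum (a + real n - 1 - 1) (real n - \<alpha>) y (a + real n - 1) = c"
    and init2: "y (a + real n - 1) = c"
  shows "\<forall>k::nat. y (a + real n - 1 + real k) =
           rising_pow ((a + real n - 1 + real k) - (a + real n - 1) + 1) (\<alpha> - 1) / Gamma \<alpha> * c
           + nabla_frac_sum (a + real n - 1) \<alpha> (\<lambda>s. f s (y s)) (a + real n - 1 + real k)"
proof
  fix k :: nat
  define b where "b = a + real n - 1"
  define Y where "Y = grid_fps (b - 1) y"
  define G where "G = binom_fps (- \<alpha>) * Y"
  have Y0: "fps_nth Y 0 = 0" and Y_Suc: "fps_nth Y (Suc i) = y (b + real i)" for i
    unfolding Y_def grid_fps_def by (simp_all add: add.commute)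
  have G_diff: "fps_nth G m = nabla_frac_diff (b - 1) \<alpha> y (b - 1 + real m)" for m
    unfolding G_def Y_def using nabla_frac_diff_fps[OF assms(1)] by simp
  have G0: "fps_nth G 0 = 0" unfolding G_def using Y0 by simp
  have G1: "fps_nth G 1 = c"
    using coeff_Suc_mult_binom_fps[OF Y0, of "- \<alpha>" 0] Y_Suc[of 0] init2
    by (simp add: G_def mult.commute binom_kernel_def b_def)
  have G_Suc: "fps_nth G (Suc i) = f (b + real i) (y (b + real i))" if "i \<ge> 1" for i
    using G_diff[of "Suc i"] eq[OF that] by (simp add: b_def algebra_simps)
  have "Y = G * binom_fps \<alpha>"
    unfolding G_def using binom_fps_inverse[of \<alpha>] by (simp add: mult_ac)
  then have "y (b + real k) = c * binom_kernel \<alpha> k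
      + (\<Sum>i=1..k. f (b + real i) (y (b + real i)) * binom_kernel \<alpha> (k - i))"
    using Y_Suc[of k] coeff_Suc_mult_binom_fps[OF G0, of \<alpha> k] G1 G_Suc by simp
  then show "y (a + real n - 1 + real k) =
           rising_pow ((a + real n - 1 + real k) - (a + real n - 1) + 1) (\<alpha> - 1) / Gamma \<alpha> * c
           + nabla_frac_sum (a + real n - 1) \<alpha> (\<lambda>s. f s (y s)) (a + real n - 1 + real k)"
    using binom_kernel_rising_pow[OF assms(1), of k] nabla_frac_sum_kernel[OF assms(1)]
    by (simp add: b_def mult.commute)
qed

end
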